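(* Let $p$ be a positive integer. Then $\mathrm{spec}_{\mathrm{imp}}(p)=\{0,1,2,\dots,p-1\}$. That is, for every integer $n$ with $0\le n\le p-1$ there exists a critical exactly $p$-improper interval graph $G$ and a vertex $v$ of $G$ such that $G-v$ is exactly $n$-improper, and every integer $n$ arising in this way (from some critical exactly $p$-improper interval graph by removing a single vertex) lies in $\{0,1,\dots,p-1\}$.
   Context: An interval graph is a graph admitting an interval representation: an assignment of a closed real interval to each vertex so that two distinct vertices are adjacent if and only if their intervals intersect. For an integer $p\ge 0$, a graph is $p$-improper (a $p$-improper interval graph) if it has an interval representation in which no interval contains more than $p$ other intervals. Every $(p-1)$-improper interval graph is also $p$-improper. A graph is exactly $p$-improper if it is $p$-improper but not $(p-1)$-improper (for $p=0$: it is $0$-improper); in particular every interval graph is exactly $n$-improper for a unique $n\ge 0$, its impropriety. A critical $p$-improper interval graph is a $p$-improper interval graph $G$ such that $G-v$ is $(p-1)$-improper for every vertex $v$ of $G$. The spectrum of impropriety $\mathrm{spec}_{\mathrm{imp}}(p)$ is the set of all integers $n$ such that some critical exactly $p$-improper interval graph $G$ has a vertex $v$ with $G-v$ exactly $n$-improper. *)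

theory Defs
  imports Main Complex_Main
begin

definition simple_graph :: "'a set \<Rightarrow> ('a \<Rightarrow> 'a \<Rightarrow> bool) \<Rightarrow> bool" where
  "simple_graph V E \<longleftrightarrow> finite V \<and> (\<forall>u v. E u v \<longrightarrow> u \<in> V \<and> v \<in> V)
     \<and> (\<forall>u v. E u v \<longrightarrow> E v u) \<and> (\<forall>v. \<not> E v v)"

definition interval_rep :: "'a set \<Rightarrow> ('a \<Rightarrow> 'a \<Rightarrow> bool) \<Rightarrow> ('a \<Rightarrow> real) \<Rightarrow> ('a \<Rightarrow> real) \<Rightarrow> bool" where
  "interval_rep V E l r \<longleftrightarrow> (\<forall>v\<in>V. l v \<le> r v) \<and>
     (\<forall>u\<in>V. \<forall>v\<in>V. u \<noteq> v \<longrightarrow> (E u v \<longleftrightarrow> {l u..r u} \<inter> {l v..r v} \<noteq> {}))"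

definition interval_graph :: "'a set \<Rightarrow> ('a \<Rightarrow> 'a \<Rightarrow> bool) \<Rightarrow> bool" where
  "interval_graph V E \<longleftrightarrow> simple_graph V E \<and> (\<exists>l r. interval_rep V E l r)"

definition improper :: "nat \<Rightarrow> 'a set \<Rightarrow> ('a \<Rightarrow> 'a \<Rightarrow> bool) \<Rightarrow> bool" where
  "improper p V E \<longleftrightarrow> simple_graph V E \<and> (\<exists>l r. interval_rep V E l r \<and>
     (\<forall>v\<in>V. card {u\<in>V. u \<noteq> v \<and> {l u..r u} \<subseteq> {l v..r v}} \<le> p))"

definition exactly_improper :: "nat \<Rightarrow> 'a set \<Rightarrow> ('a \<Rightarrow> 'a \<Rightarrow> bool) \<Rightarrow> bool" where
  "exactly_improper p V E \<longleftrightarrow> improper p V E \<and> (p = 0 \<or> \<not> improper (p - 1) V E)"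

definition del_vertex :: "'a set \<Rightarrow> ('a \<Rightarrow> 'a \<Rightarrow> bool) \<Rightarrow> 'a \<Rightarrow> 'a set \<times> ('a \<Rightarrow> 'a \<Rightarrow> bool)" where
  "del_vertex V E v = (V - {v}, \<lambda>x y. E x y \<and> x \<noteq> v \<and> y \<noteq> v)"

text \<open>Critical p-improper (only meaningful for p \<ge> 1, where (p-1) is a natural number).\<close>
definition critical_improper :: "nat \<Rightarrow> 'a set \<Rightarrow> ('a \<Rightarrow> 'a \<Rightarrow> bool) \<Rightarrow> bool" where
  "critical_improper p V E \<longleftrightarrow> p \<ge> 1 \<and> improper p V E \<and>
     (\<forall>v\<in>V. improper (p - 1) (fst (del_vertex V E v)) (snd (del_vertex V E v)))"

text \<open>Spectrum of impropriety; graphs are taken with vertices in nat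
  (every finite graph is isomorphic to one of these).\<close>
definition spec_imp :: "nat \<Rightarrow> nat set" where
  "spec_imp p = {n. \<exists>(V::nat set) E v. critical_improper p V E \<and> exactly_improper p V E \<and>
     v \<in> V \<and> exactly_improper n (fst (del_vertex V E v)) (snd (del_vertex V E v))}"

end

theory Submission
  imports Defs
begin

text \<open>If G is critical p-improper then every G - v is (p-1)-improper, so the impropriety of G - v
  is below p. Conversely, the claw K_{1,3} handles p = 1. For p \<ge> 2 and k \<ge> 1 take a universal
  vertex over a star K_{1,n+2} with one pendant edge and k isolated vertices. In an interval
  representation the neighbours whose intervals overhang that of the universal vertex are at most
  three, so at least n+k+1 intervals are nested in it; explicit integer layouts show that the graph is
  (n+k+1)-improper and every vertex deletion (n+k)-improper. Deleting the universal vertex leaves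
  impropriety exactly n (the star centre has n+2 independent neighbours, at most two of which
  overhang), and deleting a leaf of the star leaves impropriety exactly n+k.\<close>

definition nested :: "'a set \<Rightarrow> ('a \<Rightarrow> real) \<Rightarrow> ('a \<Rightarrow> real) \<Rightarrow> 'a \<Rightarrow> 'a set" where
  "nested V l r v = {u\<in>V. u \<noteq> v \<and> {l u..r u} \<subseteq> {l v..r v}}"

lemma improper_iff_nested:
  "improper p V E \<longleftrightarrow>
     simple_graph V E \<and> (\<exists>l r. interval_rep V E l r \<and> (\<forall>v\<in>V. card (nested V l r v) \<le> p))"
  unfolding improper_def nested_def ..

lemma improper_mono: "improper p V E \<Longrightarrow> p \<le> q \<Longrightarrow> improper q V E"
  unfolding improper_iff_nested by (meson order_trans)

lemma exactly_improper_le: "exactly_improper n V E \<Longrightarrow> improper q V E \<Longrightarrow> n \<le> q"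
proof (rule ccontr)
  assume "exactly_improper n V E" "improper q V E" "\<not> n \<le> q"
  then have "improper (n - 1) V E" by (simp add: improper_mono)
  with \<open>exactly_improper n V E\<close> \<open>\<not> n \<le> q\<close> show False
    unfolding exactly_improper_def by simp
qed

lemma fst_del_vertex [simp]: "fst (del_vertex V E w) = V - {w}"
  unfolding del_vertex_def by simp

lemma snd_del_vertex [simp]: "snd (del_vertex V E w) u v \<longleftrightarrow> E u v \<and> u \<noteq> w \<and> v \<noteq> w"
  unfolding del_vertex_def by simp

lemma simple_graph_del_vertex: "simple_graph V E \<Longrightarrow> simple_graph (V - {w}) (snd (del_vertex V E w))"
  unfolding simple_graph_def by auto

lemma interval_rep_le: "interval_rep V E l r \<Longrightarrow> u \<in> V \<Longrightarrow> l u \<le> r u"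
  unfolding interval_rep_def by auto

lemma interval_rep_adj_iff:
  "interval_rep V E l r \<Longrightarrow> u \<in> V \<Longrightarrow> w \<in> V \<Longrightarrow> u \<noteq> w \<Longrightarrow> E u w \<longleftrightarrow> l u \<le> r w \<and> l w \<le> r u"
  unfolding interval_rep_def by auto

definition triangle_free :: "'a set \<Rightarrow> ('a \<Rightarrow> 'a \<Rightarrow> bool) \<Rightarrow> bool" where
  "triangle_free V E \<longleftrightarrow> (\<forall>u\<in>V. \<forall>v\<in>V. \<forall>w\<in>V. \<not> (E u v \<and> E v w \<and> E u w))"

definition twoK2_free :: "'a set \<Rightarrow> ('a \<Rightarrow> 'a \<Rightarrow> bool) \<Rightarrow> bool" where
  "twoK2_free V E \<longleftrightarrow> (\<forall>a\<in>V. \<forall>b\<in>V. \<forall>c\<in>V. \<forall>d\<in>V. E a b \<longrightarrow> E c d \<longrightarrow> {a, b} \<inter> {c, d} = {} \<longrightarrow>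
     E a c \<or> E a d \<or> E b c \<or> E b d)"

lemma twoK2_freeD:
  "twoK2_free V E \<Longrightarrow> a \<in> V \<Longrightarrow> b \<in> V \<Longrightarrow> c \<in> V \<Longrightarrow> d \<in> V \<Longrightarrow> E a b \<Longrightarrow> E c d \<Longrightarrow>
    {a, b} \<inter> {c, d} = {} \<Longrightarrow> E a c \<or> E a d \<or> E b c \<or> E b d"
  unfolding twoK2_free_def by simp

lemma card_le_nested_plus_overhangs:
  assumes rep: "interval_rep V E l r" and "finite V" "A \<subseteq> V - {c}"
  shows "card A \<le> card (nested V l r c) + card ({u\<in>A. l u < l c} \<union> {u\<in>A. r c < r u})"
proof -
  let ?O = "{u\<in>A. l u < l c} \<union> {u\<in>A. r c < r u}"
  have "A \<subseteq> nested V l r c \<union> ?O"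
  proof
    fix u assume "u \<in> A"
    show "u \<in> nested V l r c \<union> ?O"
    proof (cases "l c \<le> l u \<and> r u \<le> r c")
      case True
      then have "{l u..r u} \<subseteq> {l c..r c}" by auto
      then show ?thesis using \<open>u \<in> A\<close> assms(3) unfolding nested_def by blast
    qed (use \<open>u \<in> A\<close> in auto)
  qed
  moreover have "finite A" using assms(2,3) finite_subset by blast
  then have "finite (nested V l r c \<union> ?O)"
    using assms(2) unfolding nested_def by simp
  ultimately have "card A \<le> card (nested V l r c \<union> ?O)" by (rule card_mono[rotated])
  also have "\<dots> \<le> card (nested V l r c) + card ?O" by (rule card_Un_le)
  finally show ?thesis .
qed

lemma left_overhangs_adjacent:
  assumes rep: "interval_rep V E l r" and "c \<in> V" "u \<in> V" "w \<in> V" "u \<noteq> w" "c \<noteq> u" "c \<noteq> w"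
    and "E c u" "E c w" "l u < l c" "l w < l c"
  shows "E u w"
proof -
  have "l c \<le> r u" "l c \<le> r w" using assms interval_rep_adj_iff[OF rep] by blast+
  then show ?thesis using assms interval_rep_adj_iff[OF rep] by simp
qed

lemma right_overhangs_adjacent:
  assumes rep: "interval_rep V E l r" and "c \<in> V" "u \<in> V" "w \<in> V" "u \<noteq> w" "c \<noteq> u" "c \<noteq> w"
    and "E c u" "E c w" "r c < r u" "r c < r w"
  shows "E u w"
proof -
  have "l u \<le> r c" "l w \<le> r c" using assms interval_rep_adj_iff[OF rep] by blast+
  then show ?thesis using assms interval_rep_adj_iff[OF rep] by simp
qed

lemma card_clique_le_2:
  assumes "finite Q" "\<And>u w. \<lbrakk>u \<in> Q; w \<in> Q; u \<noteq> w\<rbrakk> \<Longrightarrow> E u w" "triangle_free Q E"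
  shows "card Q \<le> 2"
proof (rule ccontr)
  assume "\<not> card Q \<le> 2"
  then have "3 \<le> card Q" by simp
  then obtain T where "T \<subseteq> Q" "card T = 3" by (meson obtain_subset_with_card_n)
  then obtain x y z where "T = {x, y, z}" "x \<noteq> y" "y \<noteq> z" "x \<noteq> z" by (auto simp: card_3_iff)
  then have "x \<in> Q" "y \<in> Q" "z \<in> Q" "E x y" "E y z" "E x z"
    using \<open>T \<subseteq> Q\<close> assms(2) by auto
  then show False using assms(3) unfolding triangle_free_def by blast
qed

lemma card_independent_neighbours_le:
  assumes rep: "interval_rep V E l r" and "finite V" "c \<in> V" "A \<subseteq> V - {c}"
    and adj: "\<forall>u\<in>A. E c u" and indep: "\<forall>u\<in>A. \<forall>w\<in>A. \<not> E u w"
  shows "card A \<le> card (nested V l r c) + 2"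
proof -
  have fin: "finite A" using assms finite_subset by blast
  have "u = w" if "u \<in> A" "w \<in> A" "l u < l c" "l w < l c" for u w
    using left_overhangs_adjacent[OF rep \<open>c \<in> V\<close>, of u w] that assms by blast
  then have left: "card {u\<in>A. l u < l c} \<le> 1"
    using fin by (auto simp: card_le_Suc0_iff_eq)
  have "u = w" if "u \<in> A" "w \<in> A" "r c < r u" "r c < r w" for u w
    using right_overhangs_adjacent[OF rep \<open>c \<in> V\<close>, of u w] that assms by blast
  then have right: "card {u\<in>A. r c < r u} \<le> 1"
    using fin by (auto simp: card_le_Suc0_iff_eq)
  have "card ({u\<in>A. l u < l c} \<union> {u\<in>A. r c < r u}) \<le> 2"
    using left right card_Un_le[of "{u\<in>A. l u < l c}" "{u\<in>A. r c < r u}"] by linarith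
  then show ?thesis using card_le_nested_plus_overhangs[OF rep assms(2,4)] by linarith
qed

lemma overhangs_apart_around_nested_vertex:
  assumes rep: "interval_rep V E l r" and "u \<in> V" "w \<in> V" "z \<in> V" "z \<noteq> u" "z \<noteq> w"
    and "\<not> E u z" "\<not> E w z" "l c \<le> l z" "r z \<le> r c" "l u < l c" "r c < r w"
  shows "u \<noteq> w \<and> \<not> E u w"
proof -
  have "l z \<le> r z" "l u \<le> r u" using interval_rep_le[OF rep] assms(2,4) by blast+
  have "\<not> (l u \<le> r z \<and> l z \<le> r u)" "\<not> (l w \<le> r z \<and> l z \<le> r w)"
    using assms interval_rep_adj_iff[OF rep] by blast+
  with assms \<open>l z \<le> r z\<close> have "r u < l w" by linarith
  with \<open>l u \<le> r u\<close> have "u \<noteq> w" by auto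
  with \<open>r u < l w\<close> \<open>l u \<le> r u\<close> show ?thesis
    using interval_rep_adj_iff[OF rep \<open>u \<in> V\<close> \<open>w \<in> V\<close>] by auto
qed

text \<open>The neighbours of c overhanging one end of its interval all contain that end, so they form a
  clique. If both ends had two of them, the non-neighbour z, nested in c, would separate the two
  edges, which then form an induced 2K2.\<close>

lemma card_overhangs_of_universal_le_3:
  assumes rep: "interval_rep V E l r" and "finite V" "c \<in> V" and univ: "\<forall>u\<in>V - {c}. E c u"
    and z: "z \<in> V - {c}" "\<forall>u\<in>V - {c}. \<not> E u z"
    and tf: "triangle_free (V - {c}) E" and K2: "twoK2_free (V - {c}) E"
  shows "card ({u\<in>V - {c}. l u < l c} \<union> {u\<in>V - {c}. r c < r u}) \<le> 3"
proof -
  define Qa where "Qa = {u\<in>V - {c}. l u < l c}"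
  define Qb where "Qb = {u\<in>V - {c}. r c < r u}"
  have fin: "finite Qa" "finite Qb" using \<open>finite V\<close> by (simp_all add: Qa_def Qb_def)
  have clique_a: "E u w" if "u \<in> Qa" "w \<in> Qa" "u \<noteq> w" for u w
    using left_overhangs_adjacent[OF rep \<open>c \<in> V\<close>, of u w] that univ by (auto simp: Qa_def)
  have clique_b: "E u w" if "u \<in> Qb" "w \<in> Qb" "u \<noteq> w" for u w
    using right_overhangs_adjacent[OF rep \<open>c \<in> V\<close>, of u w] that univ by (auto simp: Qb_def)
  have "triangle_free Qa E" "triangle_free Qb E"
    using tf unfolding triangle_free_def Qa_def Qb_def by blast+
  have Qa2: "card Qa \<le> 2"
    by (rule card_clique_le_2[where E = E]) (use fin clique_a \<open>triangle_free Qa E\<close> in blast)+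
  have Qb2: "card Qb \<le> 2"
    by (rule card_clique_le_2[where E = E]) (use fin clique_b \<open>triangle_free Qb E\<close> in blast)+
  have z_notin: "z \<notin> Q" if "Q \<subseteq> V - {c}" "card Q = 2" "\<And>u w. u \<in> Q \<Longrightarrow> w \<in> Q \<Longrightarrow> u \<noteq> w \<Longrightarrow> E u w" for Q
  proof
    assume "z \<in> Q"
    obtain x y where "Q = {x, y}" "x \<noteq> y" using \<open>card Q = 2\<close> by (meson card_2_iff)
    then obtain x' where "x' \<in> Q" "x' \<noteq> z" by blast
    then have "E x' z" using that(3) \<open>z \<in> Q\<close> by blast
    moreover have "x' \<in> V - {c}" using that(1) \<open>x' \<in> Q\<close> by blast
    ultimately show False using z(2) by blast
  qed
  show ?thesis
  proof (rule ccontr)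
    assume "\<not> ?thesis"
    then have "card Qa = 2" "card Qb = 2"
      using Qa2 Qb2 card_Un_le[of Qa Qb] unfolding Qa_def Qb_def by linarith+
    then obtain u1 u2 w1 w2 where Qa: "Qa = {u1, u2}" "u1 \<noteq> u2" and Qb: "Qb = {w1, w2}" "w1 \<noteq> w2"
      by (meson card_2_iff)
    have "Qa \<subseteq> V - {c}" "Qb \<subseteq> V - {c}" by (auto simp: Qa_def Qb_def)
    then have "z \<notin> Qa" "z \<notin> Qb"
      using z_notin clique_a clique_b \<open>card Qa = 2\<close> \<open>card Qb = 2\<close> by blast+
    then have z_nested: "l c \<le> l z" "r z \<le> r c"
      using z by (auto simp: Qa_def Qb_def)
    have apart: "u \<noteq> w \<and> \<not> E u w" if "u \<in> Qa" "w \<in> Qb" for u w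
    proof (rule overhangs_apart_around_nested_vertex[OF rep _ _ _ _ _ _ _ z_nested])
      show "u \<in> V" "w \<in> V" "l u < l c" "r c < r w" using that by (auto simp: Qa_def Qb_def)
      show "z \<noteq> u" "z \<noteq> w" using that \<open>z \<notin> Qa\<close> \<open>z \<notin> Qb\<close> by auto
      show "\<not> E u z" "\<not> E w z" using that z by (auto simp: Qa_def Qb_def)
    qed (use z in simp)
    have "u1 \<in> Qa" "u2 \<in> Qa" "w1 \<in> Qb" "w2 \<in> Qb" using Qa Qb by auto
    note apart = apart[OF this(1) this(3)] apart[OF this(1) this(4)] apart[OF this(2) this(3)] apart[OF this(2) this(4)]
    have "E u1 u2" "E w1 w2" using Qa Qb clique_a clique_b by auto
    moreover have "{u1, u2} \<inter> {w1, w2} = {}" using apart by auto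
    moreover have "u1 \<in> V - {c}" "u2 \<in> V - {c}" "w1 \<in> V - {c}" "w2 \<in> V - {c}"
      using Qa Qb \<open>Qa \<subseteq> V - {c}\<close> \<open>Qb \<subseteq> V - {c}\<close> by auto
    ultimately have "E u1 w1 \<or> E u1 w2 \<or> E u2 w1 \<or> E u2 w2"
      using twoK2_freeD[OF K2] by blast
    with apart show False by blast
  qed
qed

lemma card_le_nested_of_universal:
  assumes rep: "interval_rep V E l r" and "finite V" "c \<in> V" and "\<forall>u\<in>V - {c}. E c u"
    and "z \<in> V - {c}" "\<forall>u\<in>V - {c}. \<not> E u z"
    and "triangle_free (V - {c}) E" "twoK2_free (V - {c}) E"
  shows "card V \<le> card (nested V l r c) + 4"
proof -
  have "card (V - {c}) \<le> card (nested V l r c) + 3"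
    using card_le_nested_plus_overhangs[OF rep \<open>finite V\<close> subset_refl, of c]
      card_overhangs_of_universal_le_3[OF assms] by linarith
  then show ?thesis using \<open>finite V\<close> \<open>c \<in> V\<close> by (simp add: card_Diff_singleton)
qed

lemma nested_of_nat:
  fixes L R :: "'a \<Rightarrow> nat"
  assumes "\<forall>u\<in>W. L u \<le> R u"
  shows "nested W (\<lambda>u. real (L u)) (\<lambda>u. real (R u)) v = {u\<in>W. u \<noteq> v \<and> L v \<le> L u \<and> R u \<le> R v}"
  using assms unfolding nested_def by auto

lemma improper_of_nat_intervals:
  fixes L R :: "'a \<Rightarrow> nat"
  assumes "simple_graph W E" and le: "\<forall>u\<in>W. L u \<le> R u"
    and adj: "\<forall>u\<in>W. \<forall>v\<in>W. u \<noteq> v \<longrightarrow> (E u v \<longleftrightarrow> L u \<le> R v \<and> L v \<le> R u)"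
    and "\<forall>v\<in>W. card {u\<in>W. u \<noteq> v \<and> L v \<le> L u \<and> R u \<le> R v} \<le> q"
  shows "improper q W E"
proof -
  have "interval_rep W E (\<lambda>u. real (L u)) (\<lambda>u. real (R u))"
    using le adj unfolding interval_rep_def by auto
  then show ?thesis
    using assms nested_of_nat[OF le] unfolding improper_iff_nested by metis
qed

lemma improper_del_vertex_of_nat_intervals:
  fixes L R :: "'a \<Rightarrow> nat"
  assumes "simple_graph V E" "\<forall>u\<in>V. L u \<le> R u"
    and adj: "\<forall>u\<in>V - {w}. \<forall>v\<in>V - {w}. u \<noteq> v \<longrightarrow> (E u v \<longleftrightarrow> L u \<le> R v \<and> L v \<le> R u)"
    and "\<forall>v\<in>V - {w}. card ({u\<in>V. u \<noteq> v \<and> L v \<le> L u \<and> R u \<le> R v} - {w}) \<le> q"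
  shows "improper q (V - {w}) (snd (del_vertex V E w))"
proof (rule improper_of_nat_intervals[where L = L and R = R])
  show "simple_graph (V - {w}) (snd (del_vertex V E w))"
    using assms(1) by (rule simple_graph_del_vertex)
  have "{u\<in>V - {w}. u \<noteq> v \<and> L v \<le> L u \<and> R u \<le> R v} = {u\<in>V. u \<noteq> v \<and> L v \<le> L u \<and> R u \<le> R v} - {w}" for v
    by blast
  then show "\<forall>v\<in>V - {w}. card {u\<in>V - {w}. u \<noteq> v \<and> L v \<le> L u \<and> R u \<le> R v} \<le> q"
    using assms(4) by simp
qed (use assms in auto)

definition claw_V :: "nat set" where
  "claw_V = {0, 1, 2, 3}"

definition claw_E :: "nat \<Rightarrow> nat \<Rightarrow> bool" where
  "claw_E u v \<longleftrightarrow> u \<in> claw_V \<and> v \<in> claw_V \<and> u \<noteq> v \<and> (u = 0 \<or> v = 0)"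

lemma simple_graph_claw: "simple_graph claw_V claw_E"
  unfolding simple_graph_def claw_V_def claw_E_def by auto

lemma claw_layout:
  assumes "j \<in> {1, 2, 3}"
  obtains L R :: "nat \<Rightarrow> nat" where "\<forall>u\<in>claw_V. L u \<le> R u"
    "\<forall>u\<in>claw_V. \<forall>v\<in>claw_V. u \<noteq> v \<longrightarrow> (claw_E u v \<longleftrightarrow> L u \<le> R v \<and> L v \<le> R u)"
    "\<forall>v\<in>claw_V. \<forall>u\<in>claw_V. u \<noteq> v \<and> L v \<le> L u \<and> R u \<le> R v \<longrightarrow> v = 0 \<and> u = j"
proof -
  consider "j = 1" | "j = 2" | "j = 3" using assms by blast
  then show ?thesis
  proof cases
    case 1
    show ?thesis
      by (rule that[of "(!) [2, 4, 0, 6]" "(!) [6, 4, 2, 8]"]) (simp_all add: 1 claw_V_def claw_E_def)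
  next
    case 2
    show ?thesis
      by (rule that[of "(!) [2, 0, 4, 6]" "(!) [6, 2, 4, 8]"]) (simp_all add: 2 claw_V_def claw_E_def)
  next
    case 3
    show ?thesis
      by (rule that[of "(!) [2, 0, 6, 4]" "(!) [6, 2, 8, 4]"]) (simp_all add: 3 claw_V_def claw_E_def)
  qed
qed

lemma improper_1_claw: "improper 1 claw_V claw_E"
proof -
  obtain L R :: "nat \<Rightarrow> nat" where le: "\<forall>u\<in>claw_V. L u \<le> R u"
    and adj: "\<forall>u\<in>claw_V. \<forall>v\<in>claw_V. u \<noteq> v \<longrightarrow> (claw_E u v \<longleftrightarrow> L u \<le> R v \<and> L v \<le> R u)"
    and nested: "\<forall>v\<in>claw_V. \<forall>u\<in>claw_V. u \<noteq> v \<and> L v \<le> L u \<and> R u \<le> R v \<longrightarrow> v = 0 \<and> u = 2"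
    by (rule claw_layout[of 2]) simp_all
  have "{u\<in>claw_V. u \<noteq> v \<and> L v \<le> L u \<and> R u \<le> R v} \<subseteq> {2}" if "v \<in> claw_V" for v
    using nested that by blast
  then have "card {u\<in>claw_V. u \<noteq> v \<and> L v \<le> L u \<and> R u \<le> R v} \<le> 1" if "v \<in> claw_V" for v
    using card_mono[OF finite.insertI[OF finite.emptyI]] that by fastforce
  then show ?thesis
    by (intro improper_of_nat_intervals[OF simple_graph_claw le adj] ballI)
qed

lemma improper_0_claw_del_vertex:
  assumes "w \<in> claw_V"
  shows "improper 0 (claw_V - {w}) (snd (del_vertex claw_V claw_E w))"
proof -
  define j where "j = (if w = 0 then 1 else w)"
  have "j \<in> {1, 2, 3}" using assms by (auto simp: j_def claw_V_def)
  then obtain L R :: "nat \<Rightarrow> nat" where le: "\<forall>u\<in>claw_V. L u \<le> R u"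
    and adj: "\<forall>u\<in>claw_V. \<forall>v\<in>claw_V. u \<noteq> v \<longrightarrow> (claw_E u v \<longleftrightarrow> L u \<le> R v \<and> L v \<le> R u)"
    and nested: "\<forall>v\<in>claw_V. \<forall>u\<in>claw_V. u \<noteq> v \<and> L v \<le> L u \<and> R u \<le> R v \<longrightarrow> v = 0 \<and> u = j"
    by (rule claw_layout)
  have none_nested: "{u\<in>claw_V. u \<noteq> v \<and> L v \<le> L u \<and> R u \<le> R v} - {w} = {}" if "v \<in> claw_V - {w}" for v
  proof -
    have "u = w" if "u \<in> claw_V" "u \<noteq> v" "L v \<le> L u" "R u \<le> R v" for u
      using nested[rule_format, of v u] that \<open>v \<in> claw_V - {w}\<close> by (auto simp: j_def split: if_splits)
    then show ?thesis by blast
  qed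
  show ?thesis
  proof (rule improper_del_vertex_of_nat_intervals[OF simple_graph_claw le])
    show "\<forall>v\<in>claw_V - {w}. card ({u\<in>claw_V. u \<noteq> v \<and> L v \<le> L u \<and> R u \<le> R v} - {w}) \<le> 0"
      by (intro ballI, subst none_nested) simp_all
  qed (use adj in auto)
qed

lemma not_improper_0_claw: "\<not> improper 0 claw_V claw_E"
proof
  assume "improper 0 claw_V claw_E"
  then obtain l r where rep: "interval_rep claw_V claw_E l r" and "\<forall>v\<in>claw_V. card (nested claw_V l r v) \<le> 0"
    unfolding improper_iff_nested by blast
  moreover have "card {1, 2, 3 :: nat} \<le> card (nested claw_V l r 0) + 2"
    by (rule card_independent_neighbours_le[OF rep]) (auto simp: claw_V_def claw_E_def)
  ultimately show False by (simp add: claw_V_def)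
qed

text \<open>Vertex 0 is universal. Deleting it leaves the star with centre 1 and leaves 3, ..., n+4,
  the pendant edge 2--3, and the k isolated vertices n+5, ..., n+k+4.\<close>

definition hub_V :: "nat \<Rightarrow> nat \<Rightarrow> nat set" where
  "hub_V n k = {..<n+k+5}"

definition hub_E :: "nat \<Rightarrow> nat \<Rightarrow> nat \<Rightarrow> nat \<Rightarrow> bool" where
  "hub_E n k u v \<longleftrightarrow> u < n+k+5 \<and> v < n+k+5 \<and> u \<noteq> v \<and>
     (u = 0 \<or> v = 0 \<or> (u = 1 \<and> 3 \<le> v \<and> v \<le> n+4) \<or> (v = 1 \<and> 3 \<le> u \<and> u \<le> n+4)
      \<or> (u = 2 \<and> v = 3) \<or> (u = 3 \<and> v = 2))"

lemma simple_graph_hub: "simple_graph (hub_V n k) (hub_E n k)"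
  unfolding simple_graph_def hub_V_def hub_E_def by auto

lemma hub_V_cases:
  "u \<in> hub_V n k \<Longrightarrow>
    u = 0 \<or> u = 1 \<or> u = 2 \<or> u = 3 \<or> u = 4 \<or> u = n+k+4 \<or> (5 \<le> u \<and> u \<le> n+k+3)"
  unfolding hub_V_def lessThan_iff by linarith

text \<open>The vertices 2, 3 overhang the interval [4, c] of 0 on the left and
  n+k+4 overhangs it on the right; c and the right end d of the interval of 1 are tuned to the
  vertex being deleted.\<close>

definition std_left :: "nat \<Rightarrow> nat \<Rightarrow> nat \<Rightarrow> nat" where
  "std_left n k u = (if u = 0 then 4 else if u = 1 then 6 else if u = 2 then 0 else if u = 3 then 2
     else if u = n+k+4 then 8*n+8*k+36 else 8*u+4)"

definition std_right :: "nat \<Rightarrow> nat \<Rightarrow> nat \<Rightarrow> nat \<Rightarrow> nat \<Rightarrow> nat" where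
  "std_right n k c d u = (if u = 0 then c else if u = 1 then d else if u = 2 then 4 else if u = 3 then 6
     else if u = n+k+4 then 8*n+8*k+44 else 8*u+6)"

lemma std_left_le_right: "8*n+36 \<le> d \<Longrightarrow> 8*n+8*k+28 \<le> c \<Longrightarrow> std_left n k u \<le> std_right n k c d u"
  unfolding std_left_def std_right_def by auto

lemma hub_E_iff_std:
  assumes "1 \<le> k" "8*n+36 \<le> d" "d \<le> 8*n+43" "8*n+8*k+28 \<le> c"
    and "u < n+k+5" "v < n+k+5" "u \<noteq> v" "\<not> (u = 0 \<and> v = n+k+4)" "\<not> (v = 0 \<and> u = n+k+4)"
  shows "hub_E n k u v \<longleftrightarrow> std_left n k u \<le> std_right n k c d v \<and> std_left n k v \<le> std_right n k c d u"
  using assms unfolding hub_E_def std_left_def std_right_def by (auto split: if_splits)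

lemma hub_E_iff_std_all:
  assumes "1 \<le> k" "8*n+36 \<le> d" "d \<le> 8*n+43" "8*n+8*k+36 \<le> c" "u \<in> hub_V n k" "v \<in> hub_V n k" "u \<noteq> v"
  shows "hub_E n k u v \<longleftrightarrow> std_left n k u \<le> std_right n k c d v \<and> std_left n k v \<le> std_right n k c d u"
proof (cases "(u = 0 \<and> v = n+k+4) \<or> (v = 0 \<and> u = n+k+4)")
  case True
  then show ?thesis using assms unfolding hub_E_def std_left_def std_right_def by auto
next
  case False
  then show ?thesis using hub_E_iff_std assms by (simp add: hub_V_def)
qed

lemma std_nested:
  assumes "1 \<le> k" "8*n+36 \<le> d" "d \<le> 8*n+43" "8*n+8*k+28 \<le> c" "c < 8*n+8*k+44"
    and "\<forall>u \<le> n+k+3. 8*u+6 \<le> c \<longrightarrow> u \<le> M0" "\<forall>u \<le> n+k+3. 8*u+6 \<le> d \<longrightarrow> u \<le> M1"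
    and "v \<in> hub_V n k"
  shows "{u\<in>hub_V n k. u \<noteq> v \<and> std_left n k v \<le> std_left n k u \<and> std_right n k c d u \<le> std_right n k c d v}
    \<subseteq> (if v = 0 then insert 1 {4..M0} else if v = 1 then {4..M1} else {})"
proof
  fix u assume u: "u \<in> {u\<in>hub_V n k. u \<noteq> v \<and> std_left n k v \<le> std_left n k u \<and> std_right n k c d u \<le> std_right n k c d v}"
  then have "u \<in> hub_V n k" by simp
  then show "u \<in> (if v = 0 then insert 1 {4..M0} else if v = 1 then {4..M1} else {})"
    using hub_V_cases[OF \<open>u \<in> hub_V n k\<close>] hub_V_cases[OF \<open>v \<in> hub_V n k\<close>] u assms
    unfolding std_left_def std_right_def by (elim disjE) auto
qed

text \<open>The layout used when 2 or 3 is deleted: the pendant edge 2--3 sits at the right end of the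
  interval of 1, and the leaf 4 overhangs 0 on the left instead.\<close>

definition alt_left :: "nat \<Rightarrow> nat \<Rightarrow> nat \<Rightarrow> nat" where
  "alt_left n k u = (if u = 0 then 4 else if u = 1 then 2 else if u = 2 then 8*n+41 else if u = 3 then 8*n+40
     else if u = 4 then 0 else if u = n+k+4 then 8*n+8*k+36 else 8*u+4)"

definition alt_right :: "nat \<Rightarrow> nat \<Rightarrow> nat \<Rightarrow> nat" where
  "alt_right n k u = (if u = 0 then 8*n+8*k+40 else if u = 1 then 8*n+40 else if u = 2 then 8*n+42
     else if u = 3 then 8*n+41 else if u = 4 then 4 else if u = n+k+4 then 8*n+8*k+44 else 8*u+6)"

lemma alt_left_le_right: "alt_left n k u \<le> alt_right n k u"
  unfolding alt_left_def alt_right_def by auto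

lemma hub_E_iff_alt:
  assumes "1 \<le> k" "u \<in> hub_V n k" "v \<in> hub_V n k" "u \<noteq> v"
  shows "hub_E n k u v \<longleftrightarrow> alt_left n k u \<le> alt_right n k v \<and> alt_left n k v \<le> alt_right n k u"
  using hub_V_cases[OF assms(2)] hub_V_cases[OF assms(3)] assms(1,4)
  unfolding hub_E_def alt_left_def alt_right_def by (elim disjE) (simp_all; presburger)+

lemma alt_nested:
  assumes "1 \<le> k" "v \<in> hub_V n k"
  shows "{u\<in>hub_V n k. u \<noteq> v \<and> alt_left n k v \<le> alt_left n k u \<and> alt_right n k u \<le> alt_right n k v}
    \<subseteq> (if v = 0 then {2, 3} \<union> {5..n+k+3} else if v = 1 then {5..n+4} else {})"
proof
  fix u assume "u \<in> {u\<in>hub_V n k. u \<noteq> v \<and> alt_left n k v \<le> alt_left n k u \<and> alt_right n k u \<le> alt_right n k v}"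
  then have u: "u \<in> hub_V n k" "u \<noteq> v" "alt_left n k v \<le> alt_left n k u" "alt_right n k u \<le> alt_right n k v"
    by simp_all
  consider "v = 0" | "v = 1" | "v \<noteq> 0" "v \<noteq> 1" by blast
  then show "u \<in> (if v = 0 then {2, 3} \<union> {5..n+k+3} else if v = 1 then {5..n+4} else {})"
  proof cases
    case 1
    then show ?thesis
      using hub_V_cases[OF u(1)] u assms(1) unfolding alt_left_def alt_right_def by (elim disjE) simp_all
  next
    case 2
    then show ?thesis
      using hub_V_cases[OF u(1)] u assms(1) unfolding alt_left_def alt_right_def by (elim disjE) simp_all
  next
    case 3
    have False
      using hub_V_cases[OF u(1)] hub_V_cases[OF assms(2)] u assms(1) 3 unfolding alt_left_def alt_right_def
      by (elim disjE) (simp_all; presburger)+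
    then show ?thesis ..
  qed
qed

lemma improper_hub_of_layout:
  fixes L R :: "nat \<Rightarrow> nat"
  assumes le: "\<forall>u\<in>hub_V n k. L u \<le> R u"
    and adj: "\<forall>u\<in>hub_V n k. \<forall>v\<in>hub_V n k. u \<noteq> v \<longrightarrow> (hub_E n k u v \<longleftrightarrow> L u \<le> R v \<and> L v \<le> R u)"
    and nested: "\<forall>v\<in>hub_V n k. {u\<in>hub_V n k. u \<noteq> v \<and> L v \<le> L u \<and> R u \<le> R v}
      \<subseteq> (if v = 0 then X0 else if v = 1 then X1 else {})"
    and "finite X0" "finite X1" "card X0 \<le> q" "card X1 \<le> q"
  shows "improper q (hub_V n k) (hub_E n k)"
proof (rule improper_of_nat_intervals[OF simple_graph_hub le adj], intro ballI)
  fix v assume "v \<in> hub_V n k"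
  then have "card {u\<in>hub_V n k. u \<noteq> v \<and> L v \<le> L u \<and> R u \<le> R v}
      \<le> card (if v = 0 then X0 else if v = 1 then X1 else {})"
    using nested assms(4,5) by (intro card_mono) auto
  then show "card {u\<in>hub_V n k. u \<noteq> v \<and> L v \<le> L u \<and> R u \<le> R v} \<le> q"
    using assms(6,7) by (auto split: if_splits)
qed

lemma improper_hub_del_vertex_of_layout:
  fixes L R :: "nat \<Rightarrow> nat"
  assumes le: "\<forall>u\<in>hub_V n k. L u \<le> R u"
    and adj: "\<forall>u\<in>hub_V n k - {w}. \<forall>v\<in>hub_V n k - {w}. u \<noteq> v \<longrightarrow> (hub_E n k u v \<longleftrightarrow> L u \<le> R v \<and> L v \<le> R u)"
    and nested: "\<forall>v\<in>hub_V n k. {u\<in>hub_V n k. u \<noteq> v \<and> L v \<le> L u \<and> R u \<le> R v}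
      \<subseteq> (if v = 0 then X0 else if v = 1 then X1 else {})"
    and "finite X0" "finite X1" "w \<noteq> 0 \<Longrightarrow> card (X0 - {w}) \<le> q" "w \<noteq> 1 \<Longrightarrow> card (X1 - {w}) \<le> q"
  shows "improper q (hub_V n k - {w}) (snd (del_vertex (hub_V n k) (hub_E n k) w))"
proof (rule improper_del_vertex_of_nat_intervals[OF simple_graph_hub le adj], intro ballI)
  fix v assume "v \<in> hub_V n k - {w}"
  then have "{u\<in>hub_V n k. u \<noteq> v \<and> L v \<le> L u \<and> R u \<le> R v} - {w}
      \<subseteq> (if v = 0 then X0 else if v = 1 then X1 else {}) - {w}"
    using nested by blast
  then have "card ({u\<in>hub_V n k. u \<noteq> v \<and> L v \<le> L u \<and> R u \<le> R v} - {w})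
      \<le> card ((if v = 0 then X0 else if v = 1 then X1 else {}) - {w})"
    using assms(4,5) by (intro card_mono) auto
  then show "card ({u\<in>hub_V n k. u \<noteq> v \<and> L v \<le> L u \<and> R u \<le> R v} - {w}) \<le> q"
    using assms(6,7) \<open>v \<in> hub_V n k - {w}\<close> by (auto split: if_splits)
qed

lemma improper_hub:
  assumes "1 \<le> k"
  shows "improper (n+k+1) (hub_V n k) (hub_E n k)"
proof (rule improper_hub_of_layout)
  let ?c = "8*n+8*k+38" and ?d = "8*n+38"
  show "\<forall>u\<in>hub_V n k. std_left n k u \<le> std_right n k ?c ?d u"
    by (simp add: std_left_le_right)
  show "\<forall>u\<in>hub_V n k. \<forall>v\<in>hub_V n k. u \<noteq> v \<longrightarrow>
      (hub_E n k u v \<longleftrightarrow> std_left n k u \<le> std_right n k ?c ?d v \<and> std_left n k v \<le> std_right n k ?c ?d u)"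
    using hub_E_iff_std_all assms by simp
  show "\<forall>v\<in>hub_V n k. {u\<in>hub_V n k. u \<noteq> v \<and> std_left n k v \<le> std_left n k u \<and> std_right n k ?c ?d u \<le> std_right n k ?c ?d v}
      \<subseteq> (if v = 0 then insert 1 {4..n+k+3} else if v = 1 then {4..n+4} else {})"
    using std_nested assms by simp
qed simp_all

lemma improper_hub_del_0:
  assumes "1 \<le> k"
  shows "improper n (hub_V n k - {0}) (snd (del_vertex (hub_V n k) (hub_E n k) 0))"
proof (rule improper_hub_del_vertex_of_layout)
  let ?c = "8*n+8*k+38" and ?d = "8*n+37"
  show "\<forall>u\<in>hub_V n k. std_left n k u \<le> std_right n k ?c ?d u"
    by (simp add: std_left_le_right)
  show "\<forall>u\<in>hub_V n k - {0}. \<forall>v\<in>hub_V n k - {0}. u \<noteq> v \<longrightarrow>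
      (hub_E n k u v \<longleftrightarrow> std_left n k u \<le> std_right n k ?c ?d v \<and> std_left n k v \<le> std_right n k ?c ?d u)"
    using hub_E_iff_std assms by (simp add: hub_V_def)
  show "\<forall>v\<in>hub_V n k. {u\<in>hub_V n k. u \<noteq> v \<and> std_left n k v \<le> std_left n k u \<and> std_right n k ?c ?d u \<le> std_right n k ?c ?d v}
      \<subseteq> (if v = 0 then insert 1 {4..n+k+3} else if v = 1 then {4..n+3} else {})"
    using std_nested assms by simp
qed simp_all

lemma improper_hub_del_last:
  assumes "1 \<le> k"
  shows "improper (n+k) (hub_V n k - {n+k+4}) (snd (del_vertex (hub_V n k) (hub_E n k) (n+k+4)))"
proof (rule improper_hub_del_vertex_of_layout)
  let ?c = "8*n+8*k+29" and ?d = "8*n+38"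
  show "\<forall>u\<in>hub_V n k. std_left n k u \<le> std_right n k ?c ?d u"
    by (simp add: std_left_le_right)
  show "\<forall>u\<in>hub_V n k - {n+k+4}. \<forall>v\<in>hub_V n k - {n+k+4}. u \<noteq> v \<longrightarrow>
      (hub_E n k u v \<longleftrightarrow> std_left n k u \<le> std_right n k ?c ?d v \<and> std_left n k v \<le> std_right n k ?c ?d u)"
    using hub_E_iff_std assms by (simp add: hub_V_def)
  show "\<forall>v\<in>hub_V n k. {u\<in>hub_V n k. u \<noteq> v \<and> std_left n k v \<le> std_left n k u \<and> std_right n k ?c ?d u \<le> std_right n k ?c ?d v}
      \<subseteq> (if v = 0 then insert 1 {4..n+k+2} else if v = 1 then {4..n+4} else {})"
    using std_nested assms by simp
  show "card (insert 1 {4..n+k+2} - {n+k+4}) \<le> n+k" using assms by simp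
  show "card ({4..n+4} - {n+k+4}) \<le> n+k" using assms by simp
qed simp_all

lemma improper_hub_del_pendant:
  assumes "1 \<le> k" "w = 2 \<or> w = 3"
  shows "improper (n+k) (hub_V n k - {w}) (snd (del_vertex (hub_V n k) (hub_E n k) w))"
proof (rule improper_hub_del_vertex_of_layout)
  show "\<forall>u\<in>hub_V n k. alt_left n k u \<le> alt_right n k u"
    by (simp add: alt_left_le_right)
  show "\<forall>u\<in>hub_V n k - {w}. \<forall>v\<in>hub_V n k - {w}. u \<noteq> v \<longrightarrow>
      (hub_E n k u v \<longleftrightarrow> alt_left n k u \<le> alt_right n k v \<and> alt_left n k v \<le> alt_right n k u)"
    using hub_E_iff_alt assms by simp
  show "\<forall>v\<in>hub_V n k. {u\<in>hub_V n k. u \<noteq> v \<and> alt_left n k v \<le> alt_left n k u \<and> alt_right n k u \<le> alt_right n k v}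
      \<subseteq> (if v = 0 then {2, 3} \<union> {5..n+k+3} else if v = 1 then {5..n+4} else {})"
    using alt_nested assms by simp
  have "({2, 3} \<union> {5..n+k+3}) - {w} = {5 - w} \<union> {5..n+k+3}" using assms by auto
  then show "card (({2, 3} \<union> {5..n+k+3}) - {w}) \<le> n+k"
    using assms card_Un_le[of "{5 - w}" "{5..n+k+3}"] by simp
  show "card ({5..n+4} - {w}) \<le> n+k" using card_Diff1_le[of "{5..n+4}" w] by simp
qed simp_all

lemma improper_hub_del_nested:
  assumes "1 \<le> k" "w = 1 \<or> (4 \<le> w \<and> w \<le> n+k+3)"
  shows "improper (n+k) (hub_V n k - {w}) (snd (del_vertex (hub_V n k) (hub_E n k) w))"
proof (rule improper_hub_del_vertex_of_layout)
  let ?c = "8*n+8*k+38" and ?d = "8*n+38"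
  show "\<forall>u\<in>hub_V n k. std_left n k u \<le> std_right n k ?c ?d u"
    by (simp add: std_left_le_right)
  show "\<forall>u\<in>hub_V n k - {w}. \<forall>v\<in>hub_V n k - {w}. u \<noteq> v \<longrightarrow>
      (hub_E n k u v \<longleftrightarrow> std_left n k u \<le> std_right n k ?c ?d v \<and> std_left n k v \<le> std_right n k ?c ?d u)"
    using hub_E_iff_std_all assms by simp
  show "\<forall>v\<in>hub_V n k. {u\<in>hub_V n k. u \<noteq> v \<and> std_left n k v \<le> std_left n k u \<and> std_right n k ?c ?d u \<le> std_right n k ?c ?d v}
      \<subseteq> (if v = 0 then insert 1 {4..n+k+3} else if v = 1 then {4..n+4} else {})"
    using std_nested assms by simp
  show "card (insert 1 {4..n+k+3} - {w}) \<le> n+k"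
    using assms by (subst card_Diff_singleton) auto
  show "card ({4..n+4} - {w}) \<le> n+k"
    using assms card_Diff1_le[of "{4..n+4}" w] by simp
qed simp_all

lemma improper_hub_del_vertex:
  assumes "1 \<le> k" "w \<in> hub_V n k"
  shows "improper (n+k) (hub_V n k - {w}) (snd (del_vertex (hub_V n k) (hub_E n k) w))"
proof (cases "w = 0")
  case True
  then show ?thesis using improper_mono[OF improper_hub_del_0[OF assms(1)]] by simp
next
  case False
  then have "w = n+k+4 \<or> (w = 2 \<or> w = 3) \<or> (w = 1 \<or> (4 \<le> w \<and> w \<le> n+k+3))"
    using hub_V_cases[OF assms(2)] assms(1) by auto
  then consider "w = n+k+4" | "w = 2 \<or> w = 3" | "w = 1 \<or> (4 \<le> w \<and> w \<le> n+k+3)" by blast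
  then show ?thesis
  proof cases
    case 1
    then show ?thesis using improper_hub_del_last[OF assms(1)] by simp
  next
    case 2
    then show ?thesis by (rule improper_hub_del_pendant[OF assms(1)])
  next
    case 3
    then show ?thesis by (rule improper_hub_del_nested[OF assms(1)])
  qed
qed

lemma triangle_free_subset:
  "triangle_free V E \<Longrightarrow> W \<subseteq> V \<Longrightarrow> \<forall>u\<in>W. \<forall>v\<in>W. E' u v = E u v \<Longrightarrow> triangle_free W E'"
  unfolding triangle_free_def by blast

lemma twoK2_free_subset:
  "twoK2_free V E \<Longrightarrow> W \<subseteq> V \<Longrightarrow> \<forall>u\<in>W. \<forall>v\<in>W. E' u v = E u v \<Longrightarrow> twoK2_free W E'"
  unfolding twoK2_free_def by (smt (verit) subsetD)

lemma hub_E_away_from_0: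
  "hub_E n k u v \<Longrightarrow> u \<noteq> 0 \<Longrightarrow> v \<noteq> 0 \<Longrightarrow>
    (u = 1 \<and> 3 \<le> v \<and> v \<le> n+4) \<or> (v = 1 \<and> 3 \<le> u \<and> u \<le> n+4) \<or> (u = 2 \<and> v = 3) \<or> (u = 3 \<and> v = 2)"
  unfolding hub_E_def by simp

lemma triangle_free_hub: "triangle_free (hub_V n k - {0}) (hub_E n k)"
  unfolding triangle_free_def
proof (intro ballI notI)
  fix u v w assume "u \<in> hub_V n k - {0}" "v \<in> hub_V n k - {0}" "w \<in> hub_V n k - {0}"
    and E: "hub_E n k u v \<and> hub_E n k v w \<and> hub_E n k u w"
  then have "u \<noteq> 0" "v \<noteq> 0" "w \<noteq> 0" "u \<noteq> v" "v \<noteq> w" "u \<noteq> w" by (auto simp: hub_E_def)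
  with E show False
    using hub_E_away_from_0[of n k u v] hub_E_away_from_0[of n k v w] hub_E_away_from_0[of n k u w]
    by linarith
qed

lemma twoK2_free_hub: "twoK2_free (hub_V n k - {0}) (hub_E n k)"
  unfolding twoK2_free_def
proof (intro ballI impI)
  fix a b c d assume "a \<in> hub_V n k - {0}" "b \<in> hub_V n k - {0}" "c \<in> hub_V n k - {0}" "d \<in> hub_V n k - {0}"
    and ab: "hub_E n k a b" and cd: "hub_E n k c d" and "{a, b} \<inter> {c, d} = {}"
  moreover have "hub_E n k 1 3" "hub_E n k 3 1" by (auto simp: hub_E_def)
  ultimately show "hub_E n k a c \<or> hub_E n k a d \<or> hub_E n k b c \<or> hub_E n k b d"
    using hub_E_away_from_0[OF ab] hub_E_away_from_0[OF cd] by simp (elim disjE; auto)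
qed

lemma card_le_nested_hub:
  assumes "1 \<le> k" and W: "W \<subseteq> hub_V n k" "0 \<in> W" "n+k+4 \<in> W"
    and agree: "\<forall>u\<in>W. \<forall>v\<in>W. E u v = hub_E n k u v" and rep: "interval_rep W E l r"
  shows "card W \<le> card (nested W l r 0) + 4"
proof (rule card_le_nested_of_universal[OF rep])
  show "finite W" using W(1) finite_subset by (auto simp: hub_V_def)
  show "\<forall>u\<in>W - {0}. E 0 u" using agree W by (auto simp: hub_E_def hub_V_def)
  show "n+k+4 \<in> W - {0}" using W by simp
  show "\<forall>u\<in>W - {0}. \<not> E u (n+k+4)"
  proof
    fix u assume "u \<in> W - {0}"
    then have "E u (n+k+4) = hub_E n k u (n+k+4)" using agree W(3) by blast
    moreover have "\<not> hub_E n k u (n+k+4)" using \<open>u \<in> W - {0}\<close> assms(1) by (simp add: hub_E_def)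
    ultimately show "\<not> E u (n+k+4)" by simp
  qed
  have sub: "W - {0} \<subseteq> hub_V n k - {0}" using W(1) by blast
  have agree': "\<forall>u\<in>W - {0}. \<forall>v\<in>W - {0}. E u v = hub_E n k u v" using agree by blast
  show "triangle_free (W - {0}) E" by (rule triangle_free_subset[OF triangle_free_hub sub agree'])
  show "twoK2_free (W - {0}) E" by (rule twoK2_free_subset[OF twoK2_free_hub sub agree'])
qed (use W in simp)

lemma not_improper_hub:
  assumes "1 \<le> k"
  shows "\<not> improper (n+k) (hub_V n k) (hub_E n k)"
proof
  assume "improper (n+k) (hub_V n k) (hub_E n k)"
  then obtain l r where rep: "interval_rep (hub_V n k) (hub_E n k) l r"
    and bound: "\<forall>v\<in>hub_V n k. card (nested (hub_V n k) l r v) \<le> n+k"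
    unfolding improper_iff_nested by blast
  have "card (nested (hub_V n k) l r 0) \<le> n+k" using bound by (simp add: hub_V_def)
  moreover have "card (hub_V n k) \<le> card (nested (hub_V n k) l r 0) + 4"
    by (rule card_le_nested_hub[OF assms _ _ _ _ rep]) (auto simp: hub_V_def)
  ultimately show False by (simp add: hub_V_def)
qed

lemma not_improper_hub_del_4:
  assumes "1 \<le> k"
  shows "\<not> improper (n+k-1) (hub_V n k - {4}) (snd (del_vertex (hub_V n k) (hub_E n k) 4))"
proof
  assume "improper (n+k-1) (hub_V n k - {4}) (snd (del_vertex (hub_V n k) (hub_E n k) 4))"
  then obtain l r where rep: "interval_rep (hub_V n k - {4}) (snd (del_vertex (hub_V n k) (hub_E n k) 4)) l r"
    and bound: "\<forall>v\<in>hub_V n k - {4}. card (nested (hub_V n k - {4}) l r v) \<le> n+k-1"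
    unfolding improper_iff_nested by blast
  have "card (nested (hub_V n k - {4}) l r 0) \<le> n+k-1" using bound by (simp add: hub_V_def)
  moreover have "card (hub_V n k - {4}) \<le> card (nested (hub_V n k - {4}) l r 0) + 4"
    by (rule card_le_nested_hub[OF assms _ _ _ _ rep]) (use assms in \<open>auto simp: hub_V_def\<close>)
  moreover have "card (hub_V n k - {4}) = n+k+4" using assms by (simp add: hub_V_def)
  ultimately show False using assms by (simp add: hub_V_def)
qed

lemma not_improper_hub_del_0:
  assumes "1 \<le> n"
  shows "\<not> improper (n-1) (hub_V n k - {0}) (snd (del_vertex (hub_V n k) (hub_E n k) 0))"
proof
  assume "improper (n-1) (hub_V n k - {0}) (snd (del_vertex (hub_V n k) (hub_E n k) 0))"
  then obtain l r where rep: "interval_rep (hub_V n k - {0}) (snd (del_vertex (hub_V n k) (hub_E n k) 0)) l r"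
    and bound: "\<forall>v\<in>hub_V n k - {0}. card (nested (hub_V n k - {0}) l r v) \<le> n-1"
    unfolding improper_iff_nested by blast
  have "card (nested (hub_V n k - {0}) l r 1) \<le> n-1" using bound by (simp add: hub_V_def)
  moreover have "card {3..n+4} \<le> card (nested (hub_V n k - {0}) l r 1) + 2"
    by (rule card_independent_neighbours_le[OF rep]) (auto simp: hub_V_def hub_E_def)
  ultimately show False using assms by (simp add: hub_V_def)
qed

lemma spec_imp_less:
  assumes "n \<in> spec_imp p"
  shows "n < p"
proof -
  obtain V :: "nat set" and E v where crit: "critical_improper p V E" and "v \<in> V"
    and exact: "exactly_improper n (V - {v}) (snd (del_vertex V E v))"
    using assms unfolding spec_imp_def by auto
  then have "improper (p - 1) (V - {v}) (snd (del_vertex V E v))"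
    unfolding critical_improper_def by auto
  with exact have "n \<le> p - 1" by (rule exactly_improper_le)
  moreover have "1 \<le> p" using crit unfolding critical_improper_def by simp
  ultimately show ?thesis by simp
qed

lemma spec_impI:
  fixes V :: "nat set"
  assumes "critical_improper p V E" "exactly_improper p V E" "v \<in> V"
    and "exactly_improper n (V - {v}) (snd (del_vertex V E v))"
  shows "n \<in> spec_imp p"
  using assms unfolding spec_imp_def by auto

lemma critical_improper_claw: "critical_improper 1 claw_V claw_E"
  unfolding critical_improper_def using improper_1_claw improper_0_claw_del_vertex by simp

lemma exactly_improper_claw: "exactly_improper 1 claw_V claw_E"
  unfolding exactly_improper_def using improper_1_claw not_improper_0_claw by simp

lemma exactly_improper_claw_del_0: "exactly_improper 0 (claw_V - {0}) (snd (del_vertex claw_V claw_E 0))"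
proof -
  have "(0 :: nat) \<in> claw_V" by (simp add: claw_V_def)
  then show ?thesis unfolding exactly_improper_def by (simp add: improper_0_claw_del_vertex)
qed

lemma critical_improper_hub:
  assumes "1 \<le> k"
  shows "critical_improper (n+k+1) (hub_V n k) (hub_E n k)"
  unfolding critical_improper_def using improper_hub[OF assms] improper_hub_del_vertex[OF assms] by simp

lemma exactly_improper_hub:
  assumes "1 \<le> k"
  shows "exactly_improper (n+k+1) (hub_V n k) (hub_E n k)"
  unfolding exactly_improper_def using improper_hub[OF assms] not_improper_hub[OF assms] by simp

lemma exactly_improper_hub_del_0:
  assumes "1 \<le> k"
  shows "exactly_improper n (hub_V n k - {0}) (snd (del_vertex (hub_V n k) (hub_E n k) 0))"
  unfolding exactly_improper_def using improper_hub_del_0[OF assms] not_improper_hub_del_0 by auto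

lemma exactly_improper_hub_del_4:
  assumes "1 \<le> k"
  shows "exactly_improper (n+k) (hub_V n k - {4}) (snd (del_vertex (hub_V n k) (hub_E n k) 4))"
  unfolding exactly_improper_def
  using improper_hub_del_nested[OF assms] not_improper_hub_del_4[OF assms] assms by simp

theorem theorem1:
  fixes p :: nat
  assumes "p \<ge> 1"
  shows "spec_imp p = {0..<p}"
proof (intro set_eqI iffI)
  fix m assume "m \<in> spec_imp p"
  then show "m \<in> {0..<p}" by (simp add: spec_imp_less)
next
  fix m assume "m \<in> {0..<p}"
  then consider "p = 1" "m = 0" | "m + 2 \<le> p" | "2 \<le> p" "m = p - 1" using assms by fastforce
  then show "m \<in> spec_imp p"
  proof cases
    case 1
    then show ?thesis
      using spec_impI[OF critical_improper_claw exactly_improper_claw _ exactly_improper_claw_del_0]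
      by (simp add: claw_V_def)
  next
    case 2
    define k where "k = p - 1 - m"
    then have "1 \<le> k" "p = m + k + 1" using 2 by simp_all
    then show ?thesis
      using spec_impI[OF critical_improper_hub exactly_improper_hub _ exactly_improper_hub_del_0]
      by (simp add: hub_V_def)
  next
    case 3
    define k where "k = p - 1"
    then have "1 \<le> k" "p = 0 + k + 1" "m = 0 + k" using 3 by simp_all
    then show ?thesis
      using spec_impI[OF critical_improper_hub exactly_improper_hub _ exactly_improper_hub_del_4, of k 0]
      by (simp add: hub_V_def)
  qed
qed

end
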